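(* Let $(X,\tau)$ be a $T_1$ topological space. Then $X$ is a D-space if and only if the following holds: for every continuous map $f:(X,\tau)\to(\mathcal P(X),\tau_{\mathcal S(X)})$ with $x\in f(x)$ for all $x\in X$, there exist a continuous neighborhood refinement map $f_*:(X,\tau)\to(\mathcal P(X),\tau_{\mathcal S(X)})$ of $f$ and a set $D\subseteq X$ such that: (1) the map $\mathcal I:(D,\tau_D)\to(\mathcal P(D),\tau_{\mathcal S(D)})$, $\mathcal I(d)=\{d\}$, where $\tau_D$ is the subspace topology on $D$, is an injective continuous map; (2) the map $g:(X,\tau)\to(\mathcal P(D),\tau_{\mathcal S(D)})$, $g(x)=f_*(x)\cap D$, is continuous and $g^{-1}(\{\emptyset\})=\emptyset$; (3) the diagonal $\{(d,d): d\in D\}$ is contained in the pullback of $g$ and $\mathcal I$ in the category of topological spaces, i.e. in $P=\{(x,d)\in X\times D: g(x)=\mathcal I(d)\}$ (a subspace of the product $X\times D$); equivalently, $g(d)=\{d\}$ for all $d\in D$.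
   Context: For a set $A$ and $a\in A$, let $\mathcal U_A(a)=\{B\subseteq A: a\in B\}$ (the principal ultrafilter generated by $a$). The principal ultrafilter topology $\tau_{\mathcal S(A)}$ on the power set $\mathcal P(A)$ is the topology generated by the subbase $\{\mathcal U_A(a): a\in A\}$. Given a continuous map $f:(X,\tau)\to(\mathcal P(X),\tau_{\mathcal S(X)})$ with $x\in f(x)$ for all $x$, a continuous neighborhood refinement map of $f$ is a continuous map $f_*:(X,\tau)\to(\mathcal P(X),\tau_{\mathcal S(X)})$ with $x\in f_*(x)\subseteq f(x)$ for all $x\in X$. An open neighborhood assignment on $(X,\tau)$ is a function $N:X\to\tau$ with $x\in N(x)$ for all $x$. A space $(X,\tau)$ is a D-space if for every open neighborhood assignment $N$ there is a closed discrete set $D\subseteq X$ with $\bigcup_{d\in D}N(d)=X$. *)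

theory Defs
  imports "HOL-Analysis.Analysis"
begin

definition pu :: "'a set \<Rightarrow> 'a \<Rightarrow> 'a set set" where
  "pu A a = {B. B \<subseteq> A \<and> a \<in> B}"

text \<open>Principal ultrafilter topology on Pow A, generated by the subbase
  {pu A a | a in A}; the whole space Pow A is included explicitly (empty
  intersection of subbase elements), as is standard for subbases.\<close>
definition put :: "'a set \<Rightarrow> 'a set topology" where
  "put A = topology_generated_by (insert (Pow A) ((pu A) ` A))"

definition closed_discrete :: "'a topology \<Rightarrow> 'a set \<Rightarrow> bool" where
  "closed_discrete X D \<longleftrightarrow> D \<subseteq> topspace X \<and> closedin X D \<and>
     (\<forall>d\<in>D. \<exists>U. openin X U \<and> U \<inter> D = {d})"

definition D_space :: "'a topology \<Rightarrow> bool" where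
  "D_space X \<longleftrightarrow> (\<forall>N. (\<forall>x\<in>topspace X. openin X (N x) \<and> x \<in> N x) \<longrightarrow>
     (\<exists>D. closed_discrete X D \<and> (\<Union>d\<in>D. N d) = topspace X))"

definition nbhd_refinement :: "'a topology \<Rightarrow> ('a \<Rightarrow> 'a set) \<Rightarrow> ('a \<Rightarrow> 'a set) \<Rightarrow> bool" where
  "nbhd_refinement X f fs \<longleftrightarrow> continuous_map X (put (topspace X)) fs \<and>
     (\<forall>x\<in>topspace X. x \<in> fs x \<and> fs x \<subseteq> f x)"

end

theory Submission
  imports Defs
begin

text \<open>A continuous map \<open>f\<close> into \<open>\<P>(X)\<close> with \<open>x \<in> f x\<close> is the same thing as the open
  neighbourhood assignment \<open>a \<mapsto> {x. a \<in> f x}\<close>, and \<open>D\<close> covers for this assignment exactly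
  when every \<open>f x\<close> meets \<open>D\<close>. If \<open>D\<close> is closed discrete, removing the closed set \<open>D - {d}\<close>
  from \<open>f d\<close> for \<open>d \<in> D\<close> keeps the map continuous and makes \<open>f d \<inter> D = {d}\<close>.
  Conversely, if \<open>fs\<close> is continuous, \<open>fs d \<inter> D = {d}\<close> on \<open>D\<close> and \<open>fs x \<inter> D \<noteq> {}\<close>
  everywhere, then the open set \<open>{x. d \<in> fs x}\<close> isolates \<open>d\<close> in \<open>D\<close>, and a point \<open>x \<notin> D\<close>
  with \<open>d \<in> fs x\<close> is separated from \<open>D\<close> by \<open>{y. d \<in> fs y} - {d}\<close>, which is open
  because \<open>X\<close> is \<open>T\<^sub>1\<close>.\<close>

lemma continuous_map_put_iff:
  "continuous_map X (put A) g \<longleftrightarrow>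
     (\<forall>x\<in>topspace X. g x \<subseteq> A) \<and> (\<forall>a\<in>A. openin X {x\<in>topspace X. a \<in> g x})"
  (is "?lhs \<longleftrightarrow> ?into \<and> ?open")
proof -
  have union: "\<Union> (insert (Pow A) (pu A ` A)) = Pow A"
    unfolding pu_def by blast
  have "?lhs \<longleftrightarrow> (\<forall>U\<in>insert (Pow A) (pu A ` A). openin X (g -` U \<inter> topspace X)) \<and> ?into"
    unfolding put_def continuous_on_generated_topo_iff union by blast
  moreover have "g -` Pow A \<inter> topspace X = topspace X" if ?into
    using that by blast
  moreover have "g -` pu A a \<inter> topspace X = {x\<in>topspace X. a \<in> g x}" if ?into for a
    using that unfolding pu_def by blast
  ultimately show ?thesis by auto
qed

lemma continuous_map_put_Int:
  assumes "continuous_map X (put A) g" "B \<subseteq> A"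
  shows "continuous_map X (put B) (\<lambda>x. g x \<inter> B)"
proof -
  have "{x\<in>topspace X. a \<in> g x \<inter> B} = {x\<in>topspace X. a \<in> g x}" if "a \<in> B" for a
    using that by auto
  then show ?thesis
    using assms unfolding continuous_map_put_iff by auto
qed

lemma continuous_map_put_transpose:
  assumes "\<forall>a\<in>topspace X. openin X (N a)"
  shows "continuous_map X (put (topspace X)) (\<lambda>x. {a\<in>topspace X. x \<in> N a})"
proof -
  have "{x\<in>topspace X. a \<in> {a\<in>topspace X. x \<in> N a}} = N a" if "a \<in> topspace X" for a
    using that assms openin_subset by fastforce
  then show ?thesis
    using assms unfolding continuous_map_put_iff by auto
qed

lemma continuous_map_singleton_put_iff:
  assumes "D \<subseteq> topspace X"
  shows "continuous_map (subtopology X D) (put D) (\<lambda>d. {d}) \<longleftrightarrow>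
    (\<forall>d\<in>D. \<exists>U. openin X U \<and> U \<inter> D = {d})"
proof -
  have "{x\<in>topspace (subtopology X D). d \<in> {x}} = {d}" if "d \<in> D" for d
    using that assms by auto
  then have "continuous_map (subtopology X D) (put D) (\<lambda>d. {d}) \<longleftrightarrow>
      (\<forall>d\<in>D. openin (subtopology X D) {d})"
    unfolding continuous_map_put_iff by auto
  then show ?thesis
    unfolding openin_subtopology by (metis (no_types, lifting))
qed

lemma closed_discrete_closedin_remove:
  assumes "closed_discrete X D" "a \<in> D"
  shows "closedin X (D - {a})"
proof -
  obtain U where U: "openin X U" "U \<inter> D = {a}"
    using assms unfolding closed_discrete_def by blast
  have "D - {a} = D \<inter> (topspace X - U)"
    using U assms unfolding closed_discrete_def by auto
  then show ?thesis
    using assms(1) U(1) unfolding closed_discrete_def by auto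
qed

lemma closed_discrete_separating_refinement:
  assumes D: "closed_discrete X D"
    and f: "continuous_map X (put (topspace X)) f" "\<forall>x\<in>topspace X. x \<in> f x"
  obtains fs where "nbhd_refinement X f fs" "\<forall>d\<in>D. fs d \<inter> D = {d}"
    "\<forall>x\<in>topspace X - D. fs x \<inter> D = f x \<inter> D"
proof
  define fs where "fs x = f x - (if x \<in> D then D - {x} else {})" for x
  have DX: "D \<subseteq> topspace X"
    using D unfolding closed_discrete_def by blast
  have preimage: "{x\<in>topspace X. a \<in> fs x} =
      {x\<in>topspace X. a \<in> f x} \<inter> (if a \<in> D then topspace X - (D - {a}) else topspace X)" for a
    by (auto simp: fs_def)
  have "openin X {x\<in>topspace X. a \<in> fs x}" if "a \<in> topspace X" for a
    using f that closed_discrete_closedin_remove[OF D]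
    unfolding preimage continuous_map_put_iff by (simp add: openin_Int openin_diff)
  then have "continuous_map X (put (topspace X)) fs"
    using f unfolding continuous_map_put_iff by (auto simp: fs_def)
  then show "nbhd_refinement X f fs"
    using f(2) unfolding nbhd_refinement_def by (auto simp: fs_def)
  show "\<forall>d\<in>D. fs d \<inter> D = {d}"
    using f(2) DX by (auto simp: fs_def)
  show "\<forall>x\<in>topspace X - D. fs x \<inter> D = f x \<inter> D"
    by (auto simp: fs_def)
qed

lemma t1_space_closed_discrete_if_separating:
  assumes "t1_space X" "D \<subseteq> topspace X"
    and fs: "continuous_map X (put (topspace X)) fs"
    and meets: "\<forall>x\<in>topspace X. fs x \<inter> D \<noteq> {}"
    and diag: "\<forall>d\<in>D. fs d \<inter> D = {d}"
  shows "closed_discrete X D"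
proof -
  let ?V = "\<lambda>d. {x\<in>topspace X. d \<in> fs x}"
  have V_open: "openin X (?V d)" if "d \<in> D" for d
    using fs that assms(2) unfolding continuous_map_put_iff by auto
  have V_trace: "?V d \<inter> D = {d}" if d: "d \<in> D" for d
  proof -
    have "e = d" if e: "e \<in> D" "d \<in> fs e" for e
    proof -
      have "d \<in> fs e \<inter> D" using e d by simp
      then show ?thesis using diag e(1) by simp
    qed
    moreover have "d \<in> fs d"
      using diag d by (metis IntD1 singletonI)
    ultimately show ?thesis
      using d assms(2) by auto
  qed
  have "openin X (topspace X - D)"
  proof (subst openin_subopen, intro ballI)
    fix x assume x: "x \<in> topspace X - D"
    then obtain d where d: "d \<in> D" "d \<in> fs x"
      using meets by auto
    have "openin X (?V d - {d})"
      using V_open[OF d(1)] assms(1,2) d(1)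
      by (simp add: openin_diff t1_space_closedin_singleton subset_iff)
    moreover have "?V d - {d} \<subseteq> topspace X - D"
      using V_trace[OF d(1)] by auto
    ultimately show "\<exists>T. openin X T \<and> x \<in> T \<and> T \<subseteq> topspace X - D"
      using x d by blast
  qed
  then have "closedin X D"
    using assms(2) by (simp add: closedin_def)
  moreover have "\<exists>U. openin X U \<and> U \<inter> D = {d}" if "d \<in> D" for d
    using V_open[OF that] V_trace[OF that] by blast
  ultimately show ?thesis
    using assms(2) unfolding closed_discrete_def by blast
qed

lemma D_space_separating_refinement:
  assumes "D_space X"
    and f: "continuous_map X (put (topspace X)) f" "\<forall>x\<in>topspace X. x \<in> f x"
  obtains fs D where "nbhd_refinement X f fs" "closed_discrete X D"
    "\<forall>x\<in>topspace X. fs x \<inter> D \<noteq> {}" "\<forall>d\<in>D. fs d \<inter> D = {d}"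
proof -
  define N where "N a = {x\<in>topspace X. a \<in> f x}" for a
  have "\<forall>a\<in>topspace X. openin X (N a) \<and> a \<in> N a"
    using f unfolding continuous_map_put_iff N_def by auto
  then obtain D where D: "closed_discrete X D" and cover: "(\<Union>d\<in>D. N d) = topspace X"
    using assms(1) unfolding D_space_def by blast
  obtain fs where fs: "nbhd_refinement X f fs" "\<forall>d\<in>D. fs d \<inter> D = {d}"
    "\<forall>x\<in>topspace X - D. fs x \<inter> D = f x \<inter> D"
    using closed_discrete_separating_refinement[OF D f] .
  have "fs x \<inter> D \<noteq> {}" if "x \<in> topspace X" for x
    using that fs(2,3) cover by (cases "x \<in> D") (auto simp: N_def)
  then show ?thesis
    using that fs(1,2) D by blast
qed

lemma t1_space_D_space_if_separating_refinements:
  assumes "t1_space X"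
    and refine: "\<And>f. continuous_map X (put (topspace X)) f \<Longrightarrow> \<forall>x\<in>topspace X. x \<in> f x \<Longrightarrow>
      \<exists>fs D. nbhd_refinement X f fs \<and> D \<subseteq> topspace X \<and>
        (\<forall>x\<in>topspace X. fs x \<inter> D \<noteq> {}) \<and> (\<forall>d\<in>D. fs d \<inter> D = {d})"
  shows "D_space X"
  unfolding D_space_def
proof (intro allI impI)
  fix N assume N: "\<forall>x\<in>topspace X. openin X (N x) \<and> x \<in> N x"
  define f where "f x = {a\<in>topspace X. x \<in> N a}" for x
  have "continuous_map X (put (topspace X)) f" "\<forall>x\<in>topspace X. x \<in> f x"
    using N continuous_map_put_transpose[of X N] unfolding f_def by auto
  then obtain fs D where fs: "nbhd_refinement X f fs" and DX: "D \<subseteq> topspace X"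
    and meets: "\<forall>x\<in>topspace X. fs x \<inter> D \<noteq> {}" and diag: "\<forall>d\<in>D. fs d \<inter> D = {d}"
    using refine by metis
  have fs_cont: "continuous_map X (put (topspace X)) fs"
    and fs_sub: "\<forall>x\<in>topspace X. fs x \<subseteq> f x"
    using fs unfolding nbhd_refinement_def by auto
  have "x \<in> (\<Union>d\<in>D. N d)" if x: "x \<in> topspace X" for x
  proof -
    obtain d where "d \<in> D" "d \<in> fs x"
      using meets x by blast
    then show ?thesis
      using fs_sub x by (auto simp: f_def)
  qed
  moreover have "N d \<subseteq> topspace X" if "d \<in> D" for d
    using N DX that openin_subset by blast
  ultimately have "(\<Union>d\<in>D. N d) = topspace X"
    by blast
  then show "\<exists>D. closed_discrete X D \<and> (\<Union>d\<in>D. N d) = topspace X"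
    using t1_space_closed_discrete_if_separating[OF assms(1) DX fs_cont meets diag] by blast
qed

theorem mainTheorem1:
  fixes X :: "'a topology"
  assumes "t1_space X"
  shows "D_space X \<longleftrightarrow>
    (\<forall>f. continuous_map X (put (topspace X)) f \<and> (\<forall>x\<in>topspace X. x \<in> f x) \<longrightarrow>
      (\<exists>fs D. nbhd_refinement X f fs \<and> D \<subseteq> topspace X \<and>
         continuous_map (subtopology X D) (put D) (\<lambda>d. {d}) \<and> inj_on (\<lambda>d. {d}) D \<and>
         continuous_map X (put D) (\<lambda>x. fs x \<inter> D) \<and>
         {x \<in> topspace X. fs x \<inter> D = {}} = {} \<and>
         (\<forall>d\<in>D. (d, d) \<in> {(x, e) \<in> topspace X \<times> D. fs x \<inter> D = {e}})))"
  (is "?L \<longleftrightarrow> (\<forall>f. _ \<longrightarrow> ?refined f)")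
proof
  assume ?L
  show "\<forall>f. continuous_map X (put (topspace X)) f \<and> (\<forall>x\<in>topspace X. x \<in> f x) \<longrightarrow> ?refined f"
  proof (intro allI impI, elim conjE)
    fix f assume "continuous_map X (put (topspace X)) f" "\<forall>x\<in>topspace X. x \<in> f x"
    with \<open>?L\<close> obtain fs D where fs: "nbhd_refinement X f fs" and D: "closed_discrete X D"
      and "\<forall>x\<in>topspace X. fs x \<inter> D \<noteq> {}" "\<forall>d\<in>D. fs d \<inter> D = {d}"
      by (rule D_space_separating_refinement)
    moreover have DX: "D \<subseteq> topspace X"
      using D unfolding closed_discrete_def by blast
    moreover have "continuous_map (subtopology X D) (put D) (\<lambda>d. {d})"
      using D DX continuous_map_singleton_put_iff unfolding closed_discrete_def by blast
    moreover have "continuous_map X (put D) (\<lambda>x. fs x \<inter> D)"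
      using fs DX continuous_map_put_Int unfolding nbhd_refinement_def by blast
    ultimately show "?refined f"
      by (intro exI[of _ fs] exI[of _ D]) (auto simp: inj_on_def)
  qed
next
  assume R: "\<forall>f. continuous_map X (put (topspace X)) f \<and> (\<forall>x\<in>topspace X. x \<in> f x) \<longrightarrow> ?refined f"
  show ?L
  proof (rule t1_space_D_space_if_separating_refinements[OF assms])
    fix f assume "continuous_map X (put (topspace X)) f" "\<forall>x\<in>topspace X. x \<in> f x"
    then have "?refined f"
      using R by simp
    then obtain fs D where "nbhd_refinement X f fs" "D \<subseteq> topspace X"
      "\<forall>x\<in>topspace X. fs x \<inter> D \<noteq> {}" "\<forall>d\<in>D. fs d \<inter> D = {d}"
      by fastforce
    then show "\<exists>fs D. nbhd_refinement X f fs \<and> D \<subseteq> topspace X \<and>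
        (\<forall>x\<in>topspace X. fs x \<inter> D \<noteq> {}) \<and> (\<forall>d\<in>D. fs d \<inter> D = {d})"
      by blast
  qed
qed

end
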